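(* Let $\psi_{0,0,0}(x_1,x_2,x_3)=(1-x_1)(1-x_2)(1-x_3)$ on $[0,1]^3$. For any prescribed real numbers $\tilde I_0,\tilde I_1,\tilde I_2,\tilde I_3,\tilde J_0,\tilde J_1,\tilde J_2$ there exists a function $\tilde\psi_{0,0,0}$ on $[0,1]^3$ that is continuous, piecewise $C^1$ and symmetric under permutation of the coordinate axes, such that $I_a=\tilde I_a$ for $a=0,1,2,3$ and $J_b=\tilde J_b$ for $b=0,1,2$, where $I_a,J_b$ are the quantities associated with $\tilde\psi_{0,0,0}$ as defined in the context.
   Context: Given $\tilde\psi_{0,0,0}$ on $[0,1]^3$, for $s=(s_1,s_2,s_3)\in\{0,1\}^3$ let $\tilde\psi_{s_1,s_2,s_3}(x)=\tilde\psi_{0,0,0}(|x_1-s_1|,|x_2-s_2|,|x_3-s_3|)$ (the test shape function attached to the corner $s$ of the unit cube). Define $I_{s_1,s_2,s_3}=\int_{[0,1]^3}\psi_{0,0,0}\,\tilde\psi_{s_1,s_2,s_3}\,dx$ and $J^{(1)}_{s_1,s_2,s_3}=\int_{[0,1]^3}\frac{\partial\psi_{0,0,0}}{\partial x_1}\frac{\partial\tilde\psi_{s_1,s_2,s_3}}{\partial x_1}\,dx$. Set $I_0=I_{0,0,0}$, $I_1=I_{1,0,0}$, $I_2=I_{1,1,0}$, $I_3=I_{1,1,1}$, and $J_0=J^{(1)}_{0,0,0}$, $J_1=J^{(1)}_{0,1,0}$, $J_2=J^{(1)}_{0,1,1}$. *)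

theory Defs
  imports "HOL-Analysis.Analysis"
begin

definition unit_cube :: "(real^3) set" where
  "unit_cube = cbox 0 1"

definition psi000 :: "real^3 \<Rightarrow> real" where
  "psi000 x = (1 - x$1) * (1 - x$2) * (1 - x$3)"

definition corner_shape :: "(real^3 \<Rightarrow> real) \<Rightarrow> real^3 \<Rightarrow> real^3 \<Rightarrow> real" where
  "corner_shape f s x = f (\<chi> i. \<bar>x$i - s$i\<bar>)"

definition pd1 :: "(real^3 \<Rightarrow> real) \<Rightarrow> real^3 \<Rightarrow> real" where
  "pd1 f x = deriv (\<lambda>t. f (x + t *\<^sub>R axis 1 1)) 0"

definition C1_on :: "(real^3) set \<Rightarrow> (real^3 \<Rightarrow> real) \<Rightarrow> bool" where
  "C1_on U g \<longleftrightarrow> (\<exists>g'. (\<forall>x\<in>U. (g has_derivative blinfun_apply (g' x)) (at x))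
                          \<and> continuous_on U g')"

definition piecewise_C1_cube :: "(real^3 \<Rightarrow> real) \<Rightarrow> bool" where
  "piecewise_C1_cube f \<longleftrightarrow>
     (\<exists>\<P>. finite \<P> \<and> \<Union>\<P> = unit_cube \<and> (\<forall>P\<in>\<P>. polytope P) \<and>
        (\<forall>P\<in>\<P>. \<exists>U g. open U \<and> P \<subseteq> U \<and> C1_on U g \<and> (\<forall>x\<in>P. f x = g x)))"

definition axis_symmetric :: "(real^3 \<Rightarrow> real) \<Rightarrow> bool" where
  "axis_symmetric f \<longleftrightarrow>
     (\<forall>p. p permutes (UNIV :: 3 set) \<longrightarrow> (\<forall>x\<in>unit_cube. f (\<chi> i. x $ p i) = f x))"

definition I_int :: "(real^3 \<Rightarrow> real) \<Rightarrow> real^3 \<Rightarrow> real \<Rightarrow> bool" where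
  "I_int pt s v \<longleftrightarrow> ((\<lambda>x. psi000 x * corner_shape pt s x) has_integral v) unit_cube"

definition J_int :: "(real^3 \<Rightarrow> real) \<Rightarrow> real^3 \<Rightarrow> real \<Rightarrow> bool" where
  "J_int pt s v \<longleftrightarrow> ((\<lambda>x. pd1 psi000 x * pd1 (corner_shape pt s) x) has_integral v) unit_cube"

end

theory Submission
  imports Defs
begin

text \<open>Take tensor products \<open>h(x\<^sub>1) h(x\<^sub>2) h(x\<^sub>3)\<close> of a one-dimensional profile \<open>h\<close>.
  Both \<open>\<psi>\<^sub>0\<^sub>0\<^sub>0\<close> and the corner reflection of such a product separate variables,
  so every moment factorises into one-dimensional integrals:
  \<open>I\<^sub>s = m(s\<^sub>1) m(s\<^sub>2) m(s\<^sub>3)\<close> with \<open>m(t) = \<integral>\<^sub>0\<^sup>1 h(|y - t|) (1 - y) dy\<close>, and, for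
  \<open>s\<^sub>1 = 0\<close>, \<open>J\<^sub>s = (h(0) - h(1)) m(s\<^sub>2) m(s\<^sub>3)\<close>.  A cubic \<open>h\<close> can realise arbitrary
  values of \<open>m(0)\<close>, \<open>m(1)\<close> and \<open>h(1) - h(0)\<close>, and seven such tensor products already span
  all seven moments.  The resulting test function is a polynomial, hence \<open>C\<^sup>1\<close>, and
  tensor products are symmetric under permutation of the axes.\<close>

lemma lborel_integral_prod_Basis:
  fixes G :: "'a::euclidean_space \<Rightarrow> real \<Rightarrow> real"
  assumes G: "\<And>b. b \<in> Basis \<Longrightarrow> integrable lborel (G b)"
  shows "integrable lborel (\<lambda>x. \<Prod>b\<in>Basis. G b (x \<bullet> b))"
    and "integral\<^sup>L lborel (\<lambda>x. \<Prod>b\<in>Basis. G b (x \<bullet> b)) = (\<Prod>b\<in>Basis. integral\<^sup>L lborel (G b))"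
proof -
  interpret product_sigma_finite "\<lambda>b::'a. lborel :: real measure" by standard
  define T where "T = (\<lambda>f::'a \<Rightarrow> real. \<Sum>b\<in>Basis. f b *\<^sub>R b)"
  define F where "F x = (\<Prod>b\<in>Basis. G b (x \<bullet> b))" for x :: 'a
  have T: "T \<in> measurable (\<Pi>\<^sub>M b\<in>Basis. lborel) borel"
    unfolding T_def by measurable
  have "F \<in> borel_measurable borel"
    unfolding F_def
    by (rule borel_measurable_prod, rule measurable_compose[of "\<lambda>x. x \<bullet> _" _ lborel]) (use G in auto)
  note distr = integrable_distr_eq[OF T this] integral_distr[OF T this]
  have FT: "F (T f) = (\<Prod>b\<in>Basis. G b (f b))" for f
    unfolding F_def T_def by (simp add: inner_sum_left inner_Basis if_distrib cong: if_cong)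
  have "integrable (\<Pi>\<^sub>M b\<in>Basis. lborel) (\<lambda>f. \<Prod>b\<in>Basis. G b (f b))"
    using G by (intro product_integrable_prod) auto
  then show "integrable lborel F"
    unfolding lborel_eq[where 'a='a] T_def[symmetric] distr by (simp add: FT)
  show "integral\<^sup>L lborel F = (\<Prod>b\<in>Basis. integral\<^sup>L lborel (G b))"
    unfolding lborel_eq[where 'a='a] T_def[symmetric] distr
    using G by (simp add: FT product_integral_prod)
qed

lemma has_integral_prod_Basis_unit_box:
  fixes g :: "'a::euclidean_space \<Rightarrow> real \<Rightarrow> real"
  assumes "\<And>b. b \<in> Basis \<Longrightarrow> continuous_on {0..1} (g b)"
  shows "((\<lambda>x. \<Prod>b\<in>Basis. g b (x \<bullet> b)) has_integral (\<Prod>b\<in>Basis. integral {0..1} (g b))) (cbox 0 One)"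
proof -
  define G where "G b t = indicator {0..1} t * g b t" for b t
  have set_int: "set_integrable lborel {0..1} (g b)" if "b \<in> Basis" for b
    using borel_integrable_atLeastAtMost'[OF assms[OF that]] .
  then have int_G: "integrable lborel (G b)" if "b \<in> Basis" for b
    using that unfolding set_integrable_def G_def by simp
  have "integral\<^sup>L lborel (G b) = integral {0..1} (g b)" if "b \<in> Basis" for b
    using set_borel_integral_eq_integral(2)[OF set_int[OF that]]
    unfolding set_lebesgue_integral_def G_def by simp
  then have "((\<lambda>x. \<Prod>b\<in>Basis. G b (x \<bullet> b)) has_integral (\<Prod>b\<in>Basis. integral {0..1} (g b))) UNIV"
    using has_integral_integral_lborel[OF lborel_integral_prod_Basis(1)[of G, OF int_G]]
    by (simp add: lborel_integral_prod_Basis(2)[of G, OF int_G])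
  moreover have "(\<Prod>b\<in>Basis. G b (x \<bullet> b)) = (if x \<in> cbox 0 One then \<Prod>b\<in>Basis. g b (x \<bullet> b) else 0)" for x :: 'a
  proof (cases "x \<in> cbox 0 One")
    case False
    then obtain b where "b \<in> Basis" "x \<bullet> b \<notin> {0..1}"
      by (auto simp: mem_box)
    then have "(\<Prod>b\<in>Basis. G b (x \<bullet> b)) = 0"
      by (intro prod_zero bexI[of _ b]) (auto simp: G_def)
    then show ?thesis
      using False by simp
  qed (auto simp: G_def mem_box intro!: prod.cong)
  ultimately show ?thesis
    by (simp add: has_integral_restrict_UNIV)
qed

lemma Basis_real3: "(Basis :: (real^3) set) = {axis 1 1, axis 2 1, axis 3 1}"
  unfolding Basis_vec_def UNIV_3 by auto

lemma axis_distinct_real3: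
  "axis (1::3) (1::real) \<noteq> axis 2 1" "axis (1::3) (1::real) \<noteq> axis 3 1"
  "axis (2::3) (1::real) \<noteq> axis 3 1"
  by (simp_all add: axis_eq_axis)

lemma One_real3: "(One :: real^3) = 1"
  by (simp add: vec_eq_iff Basis_real3 axis_distinct_real3 forall_3 axis_def)

lemma has_integral_product_unit_cube:
  fixes f1 f2 f3 :: "real \<Rightarrow> real"
  assumes "continuous_on {0..1} f1" "continuous_on {0..1} f2" "continuous_on {0..1} f3"
  shows "((\<lambda>x::real^3. f1 (x$1) * f2 (x$2) * f3 (x$3)) has_integral
           integral {0..1} f1 * integral {0..1} f2 * integral {0..1} f3) unit_cube"
proof -
  define g where "g b = (if b = axis 1 1 then f1 else if b = axis 2 1 then f2 else f3)" for b :: "real^3"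
  have "((\<lambda>x. \<Prod>b\<in>Basis. g b (x \<bullet> b)) has_integral (\<Prod>b\<in>Basis. integral {0..1} (g b))) (cbox 0 One)"
    using assms by (intro has_integral_prod_Basis_unit_box) (auto simp: g_def Basis_real3)
  then show ?thesis
    unfolding unit_cube_def One_real3[symmetric] using axis_distinct_real3
    by (simp add: Basis_real3 g_def inner_axis mult.assoc axis_eq_axis)
qed

lemma has_integral_quartic_01:
  fixes c0 c1 c2 c3 c4 :: real
  shows "((\<lambda>y. c0 + c1*y + c2*y^2 + c3*y^3 + c4*y^4) has_integral
           c0 + c1/2 + c2/3 + c3/4 + c4/5) {0..1}"
proof -
  define F where "F y = c0*y + c1*y^2/2 + c2*y^3/3 + c3*y^4/4 + c4*y^5/5" for y :: real
  have "(F has_real_derivative c0 + c1*y + c2*y^2 + c3*y^3 + c4*y^4) (at y within {0..1})" for y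
    unfolding F_def by (rule derivative_eq_intros refl | simp)+
  then have "((\<lambda>y. c0 + c1*y + c2*y^2 + c3*y^3 + c4*y^4) has_integral (F 1 - F 0)) {0..1}"
    by (intro fundamental_theorem_of_calculus) (auto simp: has_real_derivative_iff_has_vector_derivative)
  then show ?thesis
    by (simp add: F_def)
qed

lemma C1_on_const: "C1_on U (\<lambda>x. c)"
  unfolding C1_on_def by (rule exI[of _ "\<lambda>x. 0"]) (auto simp: zero_blinfun.rep_eq)

lemma C1_on_add: "C1_on U f \<Longrightarrow> C1_on U g \<Longrightarrow> C1_on U (\<lambda>x. f x + g x)"
  unfolding C1_on_def
proof (elim exE conjE)
  fix f' g'
  assume "\<forall>x\<in>U. (f has_derivative blinfun_apply (f' x)) (at x)" "continuous_on U f'"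
    and "\<forall>x\<in>U. (g has_derivative blinfun_apply (g' x)) (at x)" "continuous_on U g'"
  then show "\<exists>h'. (\<forall>x\<in>U. ((\<lambda>x. f x + g x) has_derivative blinfun_apply (h' x)) (at x)) \<and> continuous_on U h'"
    by (intro exI[of _ "\<lambda>x. f' x + g' x"]) (auto simp: plus_blinfun.rep_eq intro!: has_derivative_add continuous_on_add)
qed

lemma C1_on_imp_continuous_on:
  assumes "C1_on U f"
  shows "continuous_on U f"
proof -
  obtain f' where "\<forall>x\<in>U. (f has_derivative blinfun_apply (f' x)) (at x)"
    using assms unfolding C1_on_def by blast
  then show ?thesis
    by (intro continuous_at_imp_continuous_on ballI) (auto intro: has_derivative_continuous)
qed

lemma C1_on_mult:
  fixes f g :: "real^3 \<Rightarrow> real"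
  assumes "C1_on U f" "C1_on U g"
  shows "C1_on U (\<lambda>x. f x * g x)"
proof -
  obtain f' g' where f: "\<forall>x\<in>U. (f has_derivative blinfun_apply (f' x)) (at x)" "continuous_on U f'"
    and g: "\<forall>x\<in>U. (g has_derivative blinfun_apply (g' x)) (at x)" "continuous_on U g'"
    using assms unfolding C1_on_def by blast
  have "((\<lambda>x. f x * g x) has_derivative blinfun_apply (f x *\<^sub>R g' x + g x *\<^sub>R f' x)) (at x)" if "x \<in> U" for x
  proof -
    have "((\<lambda>x. f x * g x) has_derivative (\<lambda>v. f x * g' x v + f' x v * g x)) (at x)"
      using f(1) g(1) that by (intro has_derivative_mult) auto
    then show ?thesis
      by (simp add: plus_blinfun.rep_eq scaleR_blinfun.rep_eq mult.commute)
  qed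
  moreover have "continuous_on U (\<lambda>x. f x *\<^sub>R g' x + g x *\<^sub>R f' x)"
    using f(2) g(2) C1_on_imp_continuous_on[OF assms(1)] C1_on_imp_continuous_on[OF assms(2)]
    by (intro continuous_intros)
  ultimately show ?thesis
    unfolding C1_on_def by (intro exI[of _ "\<lambda>x. f x *\<^sub>R g' x + g x *\<^sub>R f' x"]) auto
qed

lemma C1_on_sum: "finite K \<Longrightarrow> (\<And>k. k \<in> K \<Longrightarrow> C1_on U (f k)) \<Longrightarrow> C1_on U (\<lambda>x. \<Sum>k\<in>K. f k x)"
  by (induction K rule: finite_induct) (auto intro: C1_on_const C1_on_add)

lemma C1_on_comp_nth:
  fixes h h' :: "real \<Rightarrow> real"
  assumes deriv: "\<And>y. (h has_real_derivative h' y) (at y)" and "continuous_on UNIV h'"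
  shows "C1_on U (\<lambda>x::real^3. h (x$i))"
  unfolding C1_on_def
proof (intro exI[of _ "\<lambda>x. h' (x$i) *\<^sub>R Blinfun (\<lambda>v::real^3. v$i)"] conjI ballI)
  fix x :: "real^3"
  have "((\<lambda>x::real^3. h (x$i)) has_derivative (\<lambda>v. h' (x$i) * v$i)) (at x)"
    using has_derivative_compose[OF bounded_linear_imp_has_derivative[OF bounded_linear_vec_nth]
        deriv[of "x$i", unfolded has_field_derivative_def]]
    by simp
  then show "((\<lambda>x::real^3. h (x$i)) has_derivative blinfun_apply (h' (x$i) *\<^sub>R Blinfun (\<lambda>v::real^3. v$i))) (at x)"
    by (simp add: scaleR_blinfun.rep_eq bounded_linear_Blinfun_apply[OF bounded_linear_vec_nth])
next
  show "continuous_on U (\<lambda>x::real^3. h' (x$i) *\<^sub>R Blinfun (\<lambda>v::real^3. v$i))"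
  proof -
    have "continuous_on U (\<lambda>x::real^3. h' (x$i))"
      by (rule continuous_on_compose2[OF assms(2)]) (auto intro: continuous_intros)
    then show ?thesis
      by (intro continuous_intros)
  qed
qed

lemma C1_on_imp_piecewise_C1_cube: "C1_on UNIV f \<Longrightarrow> piecewise_C1_cube f"
  unfolding piecewise_C1_cube_def
  by (intro exI[of _ "{unit_cube}"]) (auto simp: unit_cube_def polytope_interval intro!: exI[of _ UNIV] exI[of _ f])

definition tensor3 :: "(real \<Rightarrow> real) \<Rightarrow> real^3 \<Rightarrow> real" where
  "tensor3 h x = h (x$1) * h (x$2) * h (x$3)"

lemma tensor3_permute:
  assumes "p permutes (UNIV :: 3 set)"
  shows "tensor3 h (\<chi> i. x $ p i) = tensor3 h x"
proof -
  have "tensor3 h y = (\<Prod>i\<in>UNIV. h (y$i))" for y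
    unfolding UNIV_3 tensor3_def by (simp add: mult.assoc)
  then show ?thesis
    using prod.permute[OF assms, of "\<lambda>i. h (x$i)"] by (simp add: comp_def)
qed

lemma C1_on_tensor3:
  assumes "\<And>y. (h has_real_derivative h' y) (at y)" "continuous_on UNIV h'"
  shows "C1_on U (tensor3 h)"
  unfolding tensor3_def using assms by (intro C1_on_mult C1_on_comp_nth)

definition corner_moment :: "(real \<Rightarrow> real) \<Rightarrow> real \<Rightarrow> real" where
  "corner_moment h t = integral {0..1} (\<lambda>y. h \<bar>y - t\<bar> * (1 - y))"

lemma continuous_on_corner_moment_integrand:
  fixes h :: "real \<Rightarrow> real"
  assumes "continuous_on UNIV h"
  shows "continuous_on {0..1} (\<lambda>y. h \<bar>y - t\<bar> * (1 - y))"
proof -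
  have "continuous_on {0..1} (\<lambda>y. \<bar>y - t\<bar>)"
    by (intro continuous_on_rabs continuous_intros)
  then have "continuous_on {0..1} (\<lambda>y. h \<bar>y - t\<bar>)"
    by (rule continuous_on_compose2[OF assms]) auto
  then show ?thesis
    by (intro continuous_intros)
qed

lemma I_int_tensor3:
  assumes "continuous_on UNIV h"
  shows "I_int (tensor3 h) s (corner_moment h (s$1) * corner_moment h (s$2) * corner_moment h (s$3))"
proof -
  define m where "m t y = h \<bar>y - t\<bar> * (1 - y)" for t y
  have "continuous_on {0..1} (m t)" for t
    unfolding m_def[abs_def] using assms by (rule continuous_on_corner_moment_integrand)
  then have "((\<lambda>x. m (s$1) (x$1) * m (s$2) (x$2) * m (s$3) (x$3)) has_integral
               integral {0..1} (m (s$1)) * integral {0..1} (m (s$2)) * integral {0..1} (m (s$3))) unit_cube"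
    by (intro has_integral_product_unit_cube)
  moreover have "(\<lambda>x. psi000 x * corner_shape (tensor3 h) s x) = (\<lambda>x. m (s$1) (x$1) * m (s$2) (x$2) * m (s$3) (x$3))"
    by (simp add: fun_eq_iff m_def psi000_def corner_shape_def tensor3_def mult_ac)
  moreover have "corner_moment h t = integral {0..1} (m t)" for t
    by (simp add: corner_moment_def m_def[abs_def])
  ultimately show ?thesis
    unfolding I_int_def by simp
qed

lemma I_int_sum:
  assumes "finite K" "\<And>k. k \<in> K \<Longrightarrow> I_int (f k) s (v k)"
  shows "I_int (\<lambda>x. \<Sum>k\<in>K. c k * f k x) s (\<Sum>k\<in>K. c k * v k)"
proof -
  have "((\<lambda>x. \<Sum>k\<in>K. c k * (psi000 x * corner_shape (f k) s x)) has_integral (\<Sum>k\<in>K. c k * v k)) unit_cube"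
    using assms unfolding I_int_def by (intro has_integral_sum has_integral_mult_right) auto
  then show ?thesis
    unfolding I_int_def corner_shape_def by (simp add: sum_distrib_left mult_ac)
qed

lemma pd1_psi000: "pd1 psi000 x = - ((1 - x$2) * (1 - x$3))"
proof -
  have "((\<lambda>t. psi000 (x + t *\<^sub>R axis 1 1)) has_real_derivative - ((1 - x$2) * (1 - x$3))) (at 0)"
    unfolding psi000_def by (rule derivative_eq_intros refl | simp add: axis_def algebra_simps)+
  then show ?thesis
    unfolding pd1_def by (rule DERIV_imp_deriv)
qed

text \<open>For \<open>s\<^sub>1 = 0\<close> the reflection does not fold the \<open>x\<^sub>1\<close>-direction, so at interior points the
  partial derivative is that of the unreflected product; on the face \<open>x\<^sub>1 = 0\<close> it may be junk,
  which is why the \<open>J\<close>-integrals are computed over the open box.\<close>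

lemma has_real_derivative_corner_tensor3:
  assumes h: "\<And>y. (h has_real_derivative h' y) (at y)" and "s$1 = 0" "0 < x$1"
  shows "((\<lambda>t. corner_shape (tensor3 h) s (x + t *\<^sub>R axis 1 1)) has_real_derivative
           h' (x$1) * h \<bar>x$2 - s$2\<bar> * h \<bar>x$3 - s$3\<bar>) (at 0)"
proof -
  have deriv: "((\<lambda>t. h (x$1 + t) * h \<bar>x$2 - s$2\<bar> * h \<bar>x$3 - s$3\<bar>) has_real_derivative
          h' (x$1) * h \<bar>x$2 - s$2\<bar> * h \<bar>x$3 - s$3\<bar>) (at 0)"
    using DERIV_shift[of h "h' (x$1)" 0 "x$1"] h
    by (intro DERIV_cmult_right) (simp add: add.commute)
  have "h (x$1 + t) * h \<bar>x$2 - s$2\<bar> * h \<bar>x$3 - s$3\<bar> = corner_shape (tensor3 h) s (x + t *\<^sub>R axis 1 1)"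
    if "t \<in> ball 0 (x$1)" for t
    using that assms(2) by (simp add: corner_shape_def tensor3_def axis_def dist_real_def)
  then show ?thesis
    by (intro has_field_derivative_transform_within_open[OF deriv, of "ball 0 (x$1)"]) (use assms(3) in auto)
qed

lemma has_integral_J_integrand_tensor3:
  fixes s :: "real^3"
  assumes deriv: "\<And>y. (h has_real_derivative h' y) (at y)" and "continuous_on UNIV h'"
  shows "((\<lambda>x. pd1 psi000 x * (h' (x$1) * h \<bar>x$2 - s$2\<bar> * h \<bar>x$3 - s$3\<bar>)) has_integral
           (h 0 - h 1) * corner_moment h (s$2) * corner_moment h (s$3)) unit_cube"
proof -
  define m where "m t y = h \<bar>y - t\<bar> * (1 - y)" for t y
  have "continuous_on UNIV h"
    using deriv by (intro continuous_at_imp_continuous_on ballI DERIV_isCont) auto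
  then have "continuous_on {0..1} (m t)" for t
    unfolding m_def[abs_def] by (rule continuous_on_corner_moment_integrand)
  moreover have "continuous_on {0..1} (\<lambda>y. - h' y)"
    using assms(2) by (intro continuous_intros) (auto intro: continuous_on_subset)
  ultimately have prod: "((\<lambda>x. - h' (x$1) * m (s$2) (x$2) * m (s$3) (x$3)) has_integral
      integral {0..1} (\<lambda>y. - h' y) * integral {0..1} (m (s$2)) * integral {0..1} (m (s$3))) unit_cube"
    by (intro has_integral_product_unit_cube)
  have "((\<lambda>y. - h' y) has_integral - (h 1 - h 0)) {0..1}"
    using deriv by (intro has_integral_neg fundamental_theorem_of_calculus)
      (auto simp: has_real_derivative_iff_has_vector_derivative[symmetric] intro: has_field_derivative_at_within)
  then have FTC: "integral {0..1} (\<lambda>y. - h' y) = h 0 - h 1"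
    by (rule integral_unique[OF has_integral_eq_rhs]) simp
  have moment: "corner_moment h t = integral {0..1} (m t)" for t
    by (simp add: corner_moment_def m_def[abs_def])
  have integrand: "pd1 psi000 x * (h' (x$1) * h \<bar>x$2 - s$2\<bar> * h \<bar>x$3 - s$3\<bar>) =
                 - h' (x$1) * m (s$2) (x$2) * m (s$3) (x$3)" for x :: "real^3"
    by (simp add: pd1_psi000 m_def)
  show ?thesis
    unfolding integrand moment FTC[symmetric] using prod .
qed

lemma J_int_tensor3_sum:
  fixes h h' :: "'k \<Rightarrow> real \<Rightarrow> real" and s :: "real^3"
  assumes "finite K"
    and deriv: "\<And>k y. k \<in> K \<Longrightarrow> (h k has_real_derivative h' k y) (at y)"
    and cont: "\<And>k. k \<in> K \<Longrightarrow> continuous_on UNIV (h' k)"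
    and "s$1 = 0"
  shows "J_int (\<lambda>x. \<Sum>k\<in>K. c k * tensor3 (h k) x) s
           (\<Sum>k\<in>K. c k * ((h k 0 - h k 1) * corner_moment (h k) (s$2) * corner_moment (h k) (s$3)))"
proof -
  define D where "D k x = h' k (x$1) * h k \<bar>x$2 - s$2\<bar> * h k \<bar>x$3 - s$3\<bar>" for k and x :: "real^3"
  have int_box: "((\<lambda>x. \<Sum>k\<in>K. c k * (pd1 psi000 x * D k x)) has_integral
          (\<Sum>k\<in>K. c k * ((h k 0 - h k 1) * corner_moment (h k) (s$2) * corner_moment (h k) (s$3)))) (box 0 1)"
    unfolding has_integral_open_interval D_def unit_cube_def[symmetric] using assms
    by (intro has_integral_sum has_integral_mult_right has_integral_J_integrand_tensor3) auto
  have pd1_sum: "pd1 (corner_shape (\<lambda>x. \<Sum>k\<in>K. c k * tensor3 (h k) x) s) x = (\<Sum>k\<in>K. c k * D k x)"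
    if "x \<in> box 0 1" for x
  proof -
    have "0 < x$1"
      using that by (simp add: mem_box_cart)
    then have "((\<lambda>t. \<Sum>k\<in>K. c k * corner_shape (tensor3 (h k)) s (x + t *\<^sub>R axis 1 1)) has_real_derivative
                 (\<Sum>k\<in>K. c k * D k x)) (at 0)"
      unfolding D_def using assms by (intro DERIV_sum DERIV_cmult has_real_derivative_corner_tensor3) auto
    then show ?thesis
      unfolding pd1_def by (intro DERIV_imp_deriv) (simp add: corner_shape_def)
  qed
  have "((\<lambda>x. pd1 psi000 x * pd1 (corner_shape (\<lambda>x. \<Sum>k\<in>K. c k * tensor3 (h k) x) s) x) has_integral
          (\<Sum>k\<in>K. c k * ((h k 0 - h k 1) * corner_moment (h k) (s$2) * corner_moment (h k) (s$3)))) (box 0 1)"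
    using int_box by (rule has_integral_eq[rotated]) (simp add: pd1_sum sum_distrib_left mult_ac)
  then show ?thesis
    unfolding J_int_def unit_cube_def has_integral_open_interval .
qed

text \<open>The coefficients solve the linear system \<open>m(0) = a\<close>, \<open>m(1) = b\<close>, \<open>h(1) - h(0) = d\<close>
  within the span of \<open>1, y, y\<^sup>3\<close>.\<close>

definition cubic_profile :: "real \<Rightarrow> real \<Rightarrow> real \<Rightarrow> real \<Rightarrow> real" where
  "cubic_profile a b d y = (16*a - 14*b + 2*d) + (60*(b - a) - 9*d) * y + (10*d - 60*(b - a)) * y^3"

lemma cubic_profile_C1:
  shows "(cubic_profile a b d has_real_derivative deriv (cubic_profile a b d) y) (at y)"
    and "continuous_on UNIV (deriv (cubic_profile a b d))"
proof -
  have D: "(cubic_profile a b d has_real_derivative (60*(b - a) - 9*d) + 3 * (10*d - 60*(b - a)) * y^2) (at y)" for y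
    unfolding cubic_profile_def[abs_def] by (rule derivative_eq_intros refl | simp)+
  then have "deriv (cubic_profile a b d) = (\<lambda>y. (60*(b - a) - 9*d) + 3 * (10*d - 60*(b - a)) * y^2)"
    by (intro ext DERIV_imp_deriv)
  then show "(cubic_profile a b d has_real_derivative deriv (cubic_profile a b d) y) (at y)"
    and "continuous_on UNIV (deriv (cubic_profile a b d))"
    using D by (auto intro!: continuous_intros)
qed

lemma corner_moment_cubic_profile:
  shows "corner_moment (cubic_profile a b d) 0 = a"
    and "corner_moment (cubic_profile a b d) 1 = b"
proof -
  define p q r where "p = 16*a - 14*b + 2*d" "q = 60*(b - a) - 9*d" "r = 10*d - 60*(b - a)"
  have "((\<lambda>y. p + (q - p)*y + (-q)*y^2 + r*y^3 + (-r)*y^4) has_integral a) {0..1}"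
    by (rule has_integral_eq_rhs[OF has_integral_quartic_01]) (simp add: p_q_r_def field_simps)
  then have "((\<lambda>y. cubic_profile a b d \<bar>y - 0\<bar> * (1 - y)) has_integral a) {0..1}"
    by (rule has_integral_eq[rotated])
      (simp add: cubic_profile_def p_q_r_def algebra_simps power2_eq_square power3_eq_cube power4_eq_xxxx)
  then show "corner_moment (cubic_profile a b d) 0 = a"
    unfolding corner_moment_def by (rule integral_unique)
  have "((\<lambda>y. (p + q + r) + (-p - 2*q - 4*r)*y + (q + 6*r)*y^2 + (-4*r)*y^3 + r*y^4) has_integral b) {0..1}"
    by (rule has_integral_eq_rhs[OF has_integral_quartic_01]) (simp add: p_q_r_def field_simps)
  then have "((\<lambda>y. cubic_profile a b d \<bar>y - 1\<bar> * (1 - y)) has_integral b) {0..1}"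
    by (rule has_integral_eq[rotated])
      (simp add: cubic_profile_def p_q_r_def abs_of_nonpos algebra_simps power2_eq_square power3_eq_cube power4_eq_xxxx)
  then show "corner_moment (cubic_profile a b d) 1 = b"
    unfolding corner_moment_def by (rule integral_unique)
qed

definition cubic_tensor_sum ::
    "'k set \<Rightarrow> ('k \<Rightarrow> real) \<Rightarrow> ('k \<Rightarrow> real) \<Rightarrow> ('k \<Rightarrow> real) \<Rightarrow> ('k \<Rightarrow> real) \<Rightarrow> real^3 \<Rightarrow> real" where
  "cubic_tensor_sum K c a b d x = (\<Sum>k\<in>K. c k * tensor3 (cubic_profile (a k) (b k) (d k)) x)"

lemma C1_on_cubic_tensor_sum: "finite K \<Longrightarrow> C1_on U (cubic_tensor_sum K c a b d)"
  unfolding cubic_tensor_sum_def[abs_def]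
  by (intro C1_on_sum C1_on_mult C1_on_const C1_on_tensor3[OF cubic_profile_C1])

lemma axis_symmetric_cubic_tensor_sum: "axis_symmetric (cubic_tensor_sum K c a b d)"
  unfolding axis_symmetric_def cubic_tensor_sum_def by (simp add: tensor3_permute)

lemma I_int_cubic_tensor_sum:
  assumes "finite K"
  shows "I_int (cubic_tensor_sum K c a b d) s
           (\<Sum>k\<in>K. c k * (corner_moment (cubic_profile (a k) (b k) (d k)) (s$1) *
                          corner_moment (cubic_profile (a k) (b k) (d k)) (s$2) *
                          corner_moment (cubic_profile (a k) (b k) (d k)) (s$3)))"
  unfolding cubic_tensor_sum_def[abs_def] using assms
  by (intro I_int_sum I_int_tensor3) (auto simp: cubic_profile_def[abs_def] intro!: continuous_intros)

lemma J_int_cubic_tensor_sum: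
  assumes "finite K" "s$1 = 0"
  shows "J_int (cubic_tensor_sum K c a b d) s
           (\<Sum>k\<in>K. c k * (- d k * corner_moment (cubic_profile (a k) (b k) (d k)) (s$2) *
                                 corner_moment (cubic_profile (a k) (b k) (d k)) (s$3)))"
proof -
  have "cubic_profile (a k) (b k) (d k) 0 - cubic_profile (a k) (b k) (d k) 1 = - d k" for k
    by (simp add: cubic_profile_def)
  then show ?thesis
    using J_int_tensor3_sum[where h = "\<lambda>k. cubic_profile (a k) (b k) (d k)"
        and h' = "\<lambda>k. deriv (cubic_profile (a k) (b k) (d k))", OF assms(1) cubic_profile_C1 assms(2)]
    unfolding cubic_tensor_sum_def[abs_def] by simp
qed

theorem mainTheorem2:
  fixes I0 I1 I2 I3 J0 J1 J2 :: real
  shows "\<exists>pt :: real^3 \<Rightarrow> real.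
           continuous_on unit_cube pt \<and> piecewise_C1_cube pt \<and> axis_symmetric pt \<and>
           I_int pt (vector [0,0,0]) I0 \<and> I_int pt (vector [1,0,0]) I1 \<and>
           I_int pt (vector [1,1,0]) I2 \<and> I_int pt (vector [1,1,1]) I3 \<and>
           J_int pt (vector [0,0,0]) J0 \<and> J_int pt (vector [0,1,0]) J1 \<and>
           J_int pt (vector [0,1,1]) J2"
proof -
  define a b d c :: "nat \<Rightarrow> real" where
    "a k = [1, 0, 1, 1, 1, 0, 1] ! k" and "b k = [0, 1, 1, -1, 0, 1, 1] ! k"
    and "d k = [0, 0, 0, 0, -1, -1, -1] ! k"
    and "c k = [I0 - I2 - J0 + J1, I3 - I1 - J2 + J1, (I1 + I2)/2 - J1, (I2 - I1)/2, J0 - J1, J2 - J1, J1] ! k"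
    for k
  define pt where "pt = cubic_tensor_sum {..<7} c a b d"
  note I = I_int_cubic_tensor_sum[of "{..<7}" c a b d, folded pt_def]
    and J = J_int_cubic_tensor_sum[of "{..<7}" _ c a b d, folded pt_def]
  have "C1_on UNIV pt"
    unfolding pt_def by (simp add: C1_on_cubic_tensor_sum)
  then have "continuous_on unit_cube pt" "piecewise_C1_cube pt"
    by (auto intro: continuous_on_subset[OF C1_on_imp_continuous_on] C1_on_imp_piecewise_C1_cube)
  moreover have "I_int pt (vector [0,0,0]) I0" "I_int pt (vector [1,0,0]) I1"
    "I_int pt (vector [1,1,0]) I2" "I_int pt (vector [1,1,1]) I3"
    using I[of "vector [0,0,0]"] I[of "vector [1,0,0]"] I[of "vector [1,1,0]"] I[of "vector [1,1,1]"]
    by (simp_all add: eval_nat_numeral a_def b_def d_def c_def corner_moment_cubic_profile field_simps)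
  moreover have "J_int pt (vector [0,0,0]) J0" "J_int pt (vector [0,1,0]) J1" "J_int pt (vector [0,1,1]) J2"
    using J[of "vector [0,0,0]"] J[of "vector [0,1,0]"] J[of "vector [0,1,1]"]
    by (simp_all add: eval_nat_numeral a_def b_def d_def c_def corner_moment_cubic_profile field_simps)
  ultimately show ?thesis
    using axis_symmetric_cubic_tensor_sum unfolding pt_def by blast
qed

end
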